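(* Let $X=\{x_1,\dots,x_m\} \subset \mathbb{R}^n$ be a finite set of vectors, $\lambda \ge 0$, and $w_{ij} \ge 0$ for $j=2,\dots,m$, $i=1,\dots,j-1$. For $z = \begin{bmatrix} z_1^T & \dots & z_m^T\end{bmatrix}^T \in \mathbb{R}^{mn}$ (with $z_i \in \mathbb{R}^n$) define \[ \phi(z) = \sum_{i=1}^m \|x_i - z_i\|^2 + \lambda \sum_{j=2}^m \sum_{i=1}^{j-1} w_{ij}\, s\bigl(\|z_i - z_j\|\bigr), \] where $s:\mathbb{R}\to\{0,1\}$ is given by $s(0)=0$ and $s(u)=1$ for $u \neq 0$, and, for $\alpha>0$, \[ g(z;\alpha) = \sum_{i=1}^m \|x_i - z_i\|^2 + \lambda \sum_{j=2}^m \sum_{i=1}^{j-1} w_{ij}\Bigl(1 - e^{-\alpha \|z_i - z_j\|^2}\Bigr). \] Let $\{\alpha^t\}$ be a sequence of positive scalars with $\alpha^{t+1} > \alpha^t$ for all $t$ and $\lim_{t\to\infty} \alpha^t = +\infty$. For each $\alpha>0$, let $z(\alpha)$ be a global minimizer of $g(\cdot;\alpha)$ over $\mathbb{R}^{mn}$. Then: (i) the sequence $\{g(z(\alpha^t);\alpha^t)\}$ converges; (ii) the sequence $\{z(\alpha^t)\}$ has limit points; (iii) every limit point of $\{z(\alpha^t)\}$ is a global minimizer of $\phi$ over $\mathbb{R}^{mn}$.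
   Context: $\|\cdot\|$ denotes the Euclidean norm. *)

theory Defs
  imports "HOL-Analysis.Analysis"
begin

definition step_s :: "real \<Rightarrow> real" where
  "step_s u = (if u = 0 then 0 else 1)"

text \<open>A point z of R^(mn) is represented by its blocks z_1,...,z_m (z i for i in {1..m}).\<close>
definition phi :: "nat \<Rightarrow> (nat \<Rightarrow> real^'n) \<Rightarrow> real \<Rightarrow> (nat \<Rightarrow> nat \<Rightarrow> real)
                    \<Rightarrow> (nat \<Rightarrow> real^'n) \<Rightarrow> real" where
  "phi m x lam w z =
     (\<Sum>i=1..m. (norm (x i - z i))^2)
     + lam * (\<Sum>j=2..m. \<Sum>i=1..j-1. w i j * step_s (norm (z i - z j)))"

definition gfun :: "nat \<Rightarrow> (nat \<Rightarrow> real^'n) \<Rightarrow> real \<Rightarrow> (nat \<Rightarrow> nat \<Rightarrow> real)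
                    \<Rightarrow> (nat \<Rightarrow> real^'n) \<Rightarrow> real \<Rightarrow> real" where
  "gfun m x lam w z \<alpha> =
     (\<Sum>i=1..m. (norm (x i - z i))^2)
     + lam * (\<Sum>j=2..m. \<Sum>i=1..j-1. w i j * (1 - exp (- \<alpha> * (norm (z i - z j))^2)))"

text \<open>L is a limit point of the sequence of block vectors zs in R^(mn)
  (convergence of a subsequence, blockwise = in R^(mn)).\<close>
definition is_limit_point :: "nat \<Rightarrow> (nat \<Rightarrow> nat \<Rightarrow> real^'n) \<Rightarrow> (nat \<Rightarrow> real^'n) \<Rightarrow> bool" where
  "is_limit_point m zs L \<longleftrightarrow>
     (\<exists>r. strict_mono r \<and> (\<forall>i\<in>{1..m}. (\<lambda>t. zs (r t) i) \<longlonglongrightarrow> L i))"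

end

theory Submission
  imports Defs
begin

text \<open>The Gaussian kernel
  increases with \<alpha> and stays below \<open>step_s\<close>, so \<open>g(z(\<alpha>\<^sup>t);\<alpha>\<^sup>t)\<close> increases and is bounded by
  \<open>\<phi>(x)\<close>; this bounds the fidelity term and hence the minimizers. Along a convergent subsequence
  the Gaussian kernel tends to \<open>step_s\<close> at every pair of distinct limit blocks, which yields
  \<open>\<phi>(L) \<le> lim g(z(\<alpha>\<^sup>t);\<alpha>\<^sup>t) \<le> \<phi>(z)\<close> for every \<open>z\<close>.\<close>

definition fidelity :: "nat \<Rightarrow> (nat \<Rightarrow> real^'n) \<Rightarrow> (nat \<Rightarrow> real^'n) \<Rightarrow> real" where
  "fidelity m x z = (\<Sum>i=1..m. (norm (x i - z i))^2)"

definition pairwise_penalty ::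
    "nat \<Rightarrow> (nat \<Rightarrow> nat \<Rightarrow> real) \<Rightarrow> (real \<Rightarrow> real) \<Rightarrow> (nat \<Rightarrow> real^'n) \<Rightarrow> real" where
  "pairwise_penalty m w k z = (\<Sum>j=2..m. \<Sum>i=1..j-1. w i j * k (norm (z i - z j)))"

definition gauss_kernel :: "real \<Rightarrow> real \<Rightarrow> real" where
  "gauss_kernel \<alpha> u = 1 - exp (- \<alpha> * u^2)"

lemma phi_eq: "phi m x lam w z = fidelity m x z + lam * pairwise_penalty m w step_s z"
  by (simp add: phi_def fidelity_def pairwise_penalty_def)

lemma gfun_eq:
  "gfun m x lam w z \<alpha> = fidelity m x z + lam * pairwise_penalty m w (gauss_kernel \<alpha>) z"
  by (simp add: gfun_def fidelity_def pairwise_penalty_def gauss_kernel_def)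

lemma gauss_kernel_nonneg: "\<alpha> \<ge> 0 \<Longrightarrow> gauss_kernel \<alpha> u \<ge> 0"
  by (simp add: gauss_kernel_def)

lemma gauss_kernel_le_step_s: "gauss_kernel \<alpha> u \<le> step_s u"
  by (simp add: gauss_kernel_def step_s_def)

lemma gauss_kernel_mono: "\<alpha> \<le> \<beta> \<Longrightarrow> gauss_kernel \<alpha> u \<le> gauss_kernel \<beta> u"
  by (simp add: gauss_kernel_def mult_right_mono)

lemma pairwise_penalty_mono:
  assumes "\<And>i j. 2 \<le> j \<Longrightarrow> j \<le> m \<Longrightarrow> 1 \<le> i \<Longrightarrow> i \<le> j - 1 \<Longrightarrow> w i j \<ge> 0"
    and "\<And>u. u \<ge> 0 \<Longrightarrow> k u \<le> k' u"
  shows "pairwise_penalty m w k z \<le> pairwise_penalty m w k' z"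
  unfolding pairwise_penalty_def using assms by (intro sum_mono mult_left_mono) auto

lemma gfun_mono:
  assumes "lam \<ge> 0"
    and "\<And>i j. 2 \<le> j \<Longrightarrow> j \<le> m \<Longrightarrow> 1 \<le> i \<Longrightarrow> i \<le> j - 1 \<Longrightarrow> w i j \<ge> 0"
    and "\<alpha> \<le> \<beta>"
  shows "gfun m x lam w z \<alpha> \<le> gfun m x lam w z \<beta>"
  unfolding gfun_eq using assms
  by (auto intro!: mult_left_mono pairwise_penalty_mono gauss_kernel_mono)

lemma gfun_le_phi:
  assumes "lam \<ge> 0"
    and "\<And>i j. 2 \<le> j \<Longrightarrow> j \<le> m \<Longrightarrow> 1 \<le> i \<Longrightarrow> i \<le> j - 1 \<Longrightarrow> w i j \<ge> 0"
  shows "gfun m x lam w z \<alpha> \<le> phi m x lam w z"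
  unfolding gfun_eq phi_eq using assms
  by (auto intro!: mult_left_mono pairwise_penalty_mono gauss_kernel_le_step_s)

lemma fidelity_le_gfun:
  assumes "lam \<ge> 0"
    and "\<And>i j. 2 \<le> j \<Longrightarrow> j \<le> m \<Longrightarrow> 1 \<le> i \<Longrightarrow> i \<le> j - 1 \<Longrightarrow> w i j \<ge> 0"
    and "\<alpha> \<ge> 0"
  shows "fidelity m x z \<le> gfun m x lam w z \<alpha>"
proof -
  have "pairwise_penalty m w (\<lambda>_. 0) z \<le> pairwise_penalty m w (gauss_kernel \<alpha>) z"
    using assms by (intro pairwise_penalty_mono gauss_kernel_nonneg)
  then show ?thesis
    using assms(1) by (simp add: gfun_eq pairwise_penalty_def)
qed

lemma bounded_blocks_of_fidelity_bound:
  assumes "\<And>t. fidelity m x (zs t) \<le> C" and "i \<in> {1..m}"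
  shows "bounded (range (\<lambda>t. zs t i))"
proof -
  have "norm (zs t i) \<le> norm (x i) + sqrt C" for t
  proof -
    have "(norm (x i - zs t i))^2 \<le> fidelity m x (zs t)"
      unfolding fidelity_def using assms(2) by (intro member_le_sum) auto
    then have "norm (x i - zs t i) \<le> sqrt C"
      using assms(1)[of t] by (intro real_le_rsqrt) linarith
    then show ?thesis
      using norm_triangle_ineq4[of "x i" "x i - zs t i"] by simp
  qed
  then show ?thesis
    unfolding bounded_iff by blast
qed

lemma bounded_blocks_convergent_subseq:
  fixes f :: "nat \<Rightarrow> nat \<Rightarrow> 'a::heine_borel"
  assumes "\<forall>i\<in>{1..k}. bounded (range (\<lambda>t. f t i))"
  shows "\<exists>r L. strict_mono r \<and> (\<forall>i\<in>{1..k}. (\<lambda>t. f (r t) i) \<longlonglongrightarrow> L i)"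
  using assms
proof (induction k)
  case 0
  have "strict_mono (\<lambda>t::nat. t)"
    using strict_mono_id unfolding id_def .
  then show ?case
    by auto
next
  case (Suc k)
  then obtain r L where r: "strict_mono r"
    and L: "\<forall>i\<in>{1..k}. (\<lambda>t. f (r t) i) \<longlonglongrightarrow> L i"
    by auto
  have "bounded (range (\<lambda>t. f t (Suc k)))"
    using Suc.prems by auto
  then have "bounded (range (\<lambda>t. f (r t) (Suc k)))"
    by (rule bounded_subset) auto
  then obtain q l where q: "strict_mono q" and l: "((\<lambda>t. f (r t) (Suc k)) \<circ> q) \<longlonglongrightarrow> l"
    using bounded_imp_convergent_subsequence by blast
  have "(\<lambda>t. f (r (q t)) i) \<longlonglongrightarrow> (L(Suc k := l)) i" if "i \<in> {1..Suc k}" for i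
  proof (cases "i = Suc k")
    case True
    then show ?thesis
      using l by (simp add: o_def)
  next
    case False
    then show ?thesis
      using that L LIMSEQ_subseq_LIMSEQ[OF _ q, of "\<lambda>t. f (r t) i" "L i"] by (simp add: o_def)
  qed
  moreover have "strict_mono (\<lambda>t. r (q t))"
    using strict_mono_o[OF r q] unfolding o_def .
  ultimately show ?case
    by blast
qed

text \<open>Multiplying by \<open>step_s l\<close> discards the pairs whose limits coincide, where the Gaussian
  kernel need not converge to \<open>step_s 0 = 0\<close> at all.\<close>
lemma tendsto_step_s_mult_gauss_kernel:
  assumes d: "(d \<longlongrightarrow> l) F" and \<alpha>: "filterlim \<alpha> at_top F"
  shows "((\<lambda>t. step_s l * gauss_kernel (\<alpha> t) (d t)) \<longlongrightarrow> step_s l) F"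
proof (cases "l = 0")
  case True
  then show ?thesis
    by (simp add: step_s_def)
next
  case False
  have "((\<lambda>t. (d t)^2) \<longlongrightarrow> l^2) F"
    using d by (intro tendsto_intros)
  then have "filterlim (\<lambda>t. (d t)^2 * \<alpha> t) at_top F"
    using False \<alpha> by (intro filterlim_tendsto_pos_mult_at_top) auto
  then have "filterlim (\<lambda>t. - \<alpha> t * (d t)^2) at_bot F"
    using filterlim_compose[OF filterlim_uminus_at_bot_at_top] by (simp add: mult.commute)
  then have "((\<lambda>t. exp (- \<alpha> t * (d t)^2)) \<longlongrightarrow> 0) F"
    by (rule filterlim_compose[OF exp_at_bot])
  then have "((\<lambda>t. gauss_kernel (\<alpha> t) (d t)) \<longlongrightarrow> 1 - 0) F"
    unfolding gauss_kernel_def by (intro tendsto_intros)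
  then show ?thesis
    using False by (simp add: step_s_def)
qed

lemma phi_le_of_gfun_bounded:
  assumes lam: "lam \<ge> 0"
    and w: "\<And>i j. 2 \<le> j \<Longrightarrow> j \<le> m \<Longrightarrow> 1 \<le> i \<Longrightarrow> i \<le> j - 1 \<Longrightarrow> w i j \<ge> 0"
    and \<alpha>_pos: "\<And>t. \<alpha> t \<ge> 0" and \<alpha>: "filterlim \<alpha> at_top sequentially"
    and zs: "\<And>i. i \<in> {1..m} \<Longrightarrow> (\<lambda>t. zs t i) \<longlonglongrightarrow> L i"
    and bound: "\<And>t. gfun m x lam w (zs t) (\<alpha> t) \<le> C"
  shows "phi m x lam w L \<le> C"
proof -
  define lower where "lower = (\<lambda>t. fidelity m x (zs t) + lam * (\<Sum>j=2..m. \<Sum>i=1..j-1.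
      w i j * (step_s (norm (L i - L j)) * gauss_kernel (\<alpha> t) (norm (zs t i - zs t j)))))"
  have "(\<lambda>t. fidelity m x (zs t)) \<longlonglongrightarrow> fidelity m x L"
    unfolding fidelity_def using zs
    by (intro tendsto_sum tendsto_power tendsto_norm tendsto_diff tendsto_const) auto
  moreover have "(\<lambda>t. \<Sum>j=2..m. \<Sum>i=1..j-1.
      w i j * (step_s (norm (L i - L j)) * gauss_kernel (\<alpha> t) (norm (zs t i - zs t j))))
      \<longlonglongrightarrow> pairwise_penalty m w step_s L"
    unfolding pairwise_penalty_def using zs \<alpha>
    by (intro tendsto_sum tendsto_mult_left[where c = "w _ _"] tendsto_step_s_mult_gauss_kernel
        tendsto_norm tendsto_diff) auto
  ultimately have lower_lim: "lower \<longlonglongrightarrow> phi m x lam w L"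
    unfolding lower_def phi_eq by (intro tendsto_add tendsto_mult_left)
  have "step_s u * gauss_kernel (\<alpha> t) v \<le> gauss_kernel (\<alpha> t) v" for u v t
    using gauss_kernel_nonneg[OF \<alpha>_pos] by (simp add: step_s_def)
  then have "lower t \<le> gfun m x lam w (zs t) (\<alpha> t)" for t
    unfolding lower_def gfun_eq pairwise_penalty_def
    using lam w by (intro add_left_mono mult_left_mono sum_mono) auto
  then have "lower t \<le> C" for t
    using bound[of t] by (rule order_trans)
  then show ?thesis
    using LIMSEQ_le_const2[OF lower_lim] by blast
qed

theorem theorem1:
  fixes m :: nat and x :: "nat \<Rightarrow> real^'n" and lam :: real
    and w :: "nat \<Rightarrow> nat \<Rightarrow> real" and a :: "nat \<Rightarrow> real"
    and zopt :: "real \<Rightarrow> nat \<Rightarrow> real^'n"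
  assumes "inj_on x {1..m}"
    and "lam \<ge> 0"
    and "\<And>i j. 2 \<le> j \<Longrightarrow> j \<le> m \<Longrightarrow> 1 \<le> i \<Longrightarrow> i \<le> j - 1 \<Longrightarrow> w i j \<ge> 0"
    and "\<And>t. a t > 0"
    and "\<And>t. a (Suc t) > a t"
    and "filterlim a at_top sequentially"
    and "\<And>\<alpha> z. \<alpha> > 0 \<Longrightarrow> gfun m x lam w (zopt \<alpha>) \<alpha> \<le> gfun m x lam w z \<alpha>"
  shows "convergent (\<lambda>t. gfun m x lam w (zopt (a t)) (a t))
    \<and> (\<exists>L. is_limit_point m (\<lambda>t. zopt (a t)) L)
    \<and> (\<forall>L. is_limit_point m (\<lambda>t. zopt (a t)) L \<longrightarrow> (\<forall>z. phi m x lam w L \<le> phi m x lam w z))"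
proof -
  note lam = assms(2) and w = assms(3) and a_pos = assms(4) and opt = assms(7)
  define G where "G = (\<lambda>t. gfun m x lam w (zopt (a t)) (a t))"
  have G_le_phi: "G t \<le> phi m x lam w z" for t z
    using opt[OF a_pos] gfun_le_phi[OF lam w] unfolding G_def by (rule order_trans)
  have "incseq G"
  proof (rule incseq_SucI)
    fix t
    have "G t \<le> gfun m x lam w (zopt (a (Suc t))) (a t)"
      unfolding G_def by (rule opt[OF a_pos])
    also have "\<dots> \<le> G (Suc t)"
      unfolding G_def using gfun_mono[OF lam w less_imp_le[OF assms(5)]] .
    finally show "G t \<le> G (Suc t)" .
  qed
  then obtain l where "G \<longlonglongrightarrow> l"
    using incseq_convergent[of G "phi m x lam w x"] G_le_phi by blast
  then have "convergent G"
    unfolding convergent_def ..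
  moreover have "\<exists>L. is_limit_point m (\<lambda>t. zopt (a t)) L"
  proof -
    have fid: "fidelity m x (zopt (a t)) \<le> phi m x lam w x" for t
      using fidelity_le_gfun[OF lam w less_imp_le[OF a_pos]] G_le_phi[of t x]
      unfolding G_def by (rule order_trans)
    have "\<forall>i\<in>{1..m}. bounded (range (\<lambda>t. zopt (a t) i))"
      using bounded_blocks_of_fidelity_bound[where zs = "\<lambda>t. zopt (a t)", OF fid] by blast
    from bounded_blocks_convergent_subseq[OF this] show ?thesis
      unfolding is_limit_point_def by blast
  qed
  moreover have "phi m x lam w L \<le> phi m x lam w z"
    if limit_point: "is_limit_point m (\<lambda>t. zopt (a t)) L" for L z
  proof -
    obtain r where r: "strict_mono r" and L: "\<forall>i\<in>{1..m}. (\<lambda>t. zopt (a (r t)) i) \<longlonglongrightarrow> L i"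
      using limit_point unfolding is_limit_point_def by blast
    show ?thesis
    proof (rule phi_le_of_gfun_bounded[OF lam w, where \<alpha> = "\<lambda>t. a (r t)"])
      show "0 \<le> a (r t)" for t
        using a_pos[of "r t"] by simp
      show "filterlim (\<lambda>t. a (r t)) at_top sequentially"
        using filterlim_compose[OF assms(6) filterlim_subseq[OF r]] .
      show "(\<lambda>t. zopt (a (r t)) i) \<longlonglongrightarrow> L i" if "i \<in> {1..m}" for i
        using L that by blast
      show "gfun m x lam w (zopt (a (r t))) (a (r t)) \<le> phi m x lam w z" for t
        using G_le_phi[of "r t" z] by (simp add: G_def)
    qed
  qed
  ultimately show ?thesis
    unfolding G_def by blast
qed

end
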